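(* Let $n\ge2$, $q^{\min}=\bar q_0(\{1,2\})$ and $q^{\max}=\bar q_0(\{1\})$. With $v_1(q)=V(qe^{\theta_1-1})$, the function $$R(q)=\frac{v_1(q)}{1-v_1(q)}+\frac{1}{q+v_1(q)}-1$$ is quasi-convex on $[q^{\min},q^{\max}]$, with no restriction on the value of $v_1$.
   Context: Sellers $\mathbb{S}=\{1,\dots,n\}$ with qualities $\theta_1\ge\dots\ge\theta_n\ge0$. $V:(0,\infty)\to(0,1)$: $V(x)=$ the unique $v\in(0,1)$ with $v\exp(v/(1-v))=x$. For nonempty $T\subseteq\mathbb{S}$, $\bar q_0(T)\in(0,1)$ is the unique solution of $\sum_{i\in T}V(\bar q_0e^{\theta_i-1})=1-\bar q_0$. A function $f$ on an interval is quasi-convex if $f(\lambda x+(1-\lambda)y)\le\max\{f(x),f(y)\}$ for all $x,y$ in the interval and $\lambda\in[0,1]$. *)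

theory Defs
  imports "HOL-Analysis.Analysis"
begin

definition Vfun :: "real \<Rightarrow> real" where
  "Vfun x = (THE v. 0 < v \<and> v < 1 \<and> v * exp (v / (1 - v)) = x)"

definition q0bar :: "(nat \<Rightarrow> real) \<Rightarrow> nat set \<Rightarrow> real" where
  "q0bar \<theta> T = (THE q. 0 < q \<and> q < 1 \<and>
      (\<Sum>i\<in>T. Vfun (q * exp (\<theta> i - 1))) = 1 - q)"

definition quasi_convex_on :: "real set \<Rightarrow> (real \<Rightarrow> real) \<Rightarrow> bool" where
  "quasi_convex_on I f \<longleftrightarrow> (\<forall>x\<in>I. \<forall>y\<in>I. \<forall>t::real. 0 \<le> t \<and> t \<le> 1 \<longrightarrow>
      f (t * x + (1 - t) * y) \<le> max (f x) (f y))"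

end

theory Submission
  imports Defs
begin

text \<open>Substitute \<open>v = V(q c)\<close> with \<open>c = e\<^bsup>\<theta>\<^sub>1 - 1\<^esup>\<close>. This is increasing in \<open>q\<close>, with inverse
  \<open>q = \<phi>(v) = v e\<^bsup>v/(1-v)\<^esup> / c\<close>, and turns the function into \<open>F(v) = v/(1-v) + 1/(\<phi>(v) + v) - 1\<close>;
  quasi-convexity survives monotone reparametrisation. The sign of \<open>F'(v)\<close> is that of the
  polynomial \<open>G(\<phi>(v), v)\<close>, and on the region \<open>\<phi>(v) + v \<le> 1\<close>, the image of \<open>q \<le> q\<^sup>m\<^sup>a\<^sup>x\<close>, every
  zero of \<open>v \<mapsto> G(\<phi>(v), v)\<close> is crossed upwards. Hence \<open>F'\<close> never turns from positive to negative,
  so \<open>F\<close> has no interior strict maximum.\<close>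

lemma quasi_convex_on_atLeastAtMost_iff:
  "quasi_convex_on {a..b} f \<longleftrightarrow>
     (\<forall>x z y. a \<le> x \<longrightarrow> x \<le> z \<longrightarrow> z \<le> y \<longrightarrow> y \<le> b \<longrightarrow> f z \<le> max (f x) (f y))"
proof
  assume qc: "quasi_convex_on {a..b} f"
  show "\<forall>x z y. a \<le> x \<longrightarrow> x \<le> z \<longrightarrow> z \<le> y \<longrightarrow> y \<le> b \<longrightarrow> f z \<le> max (f x) (f y)"
  proof (intro allI impI)
    fix x z y :: real assume xz: "a \<le> x" "x \<le> z" "z \<le> y" "y \<le> b"
    show "f z \<le> max (f x) (f y)"
    proof (cases "x = y")
      case True then show ?thesis using xz by simp
    next
      case False
      define t where "t = (y - z) / (y - x)"
      have "0 \<le> t" "t \<le> 1" using xz False by (auto simp: t_def field_simps)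
      moreover have "t * (y - x) = y - z" using False by (simp add: t_def)
      then have "t * x + (1 - t) * y = z" by (simp add: algebra_simps)
      ultimately show ?thesis using qc xz unfolding quasi_convex_on_def by force
    qed
  qed
next
  assume between: "\<forall>x z y. a \<le> x \<longrightarrow> x \<le> z \<longrightarrow> z \<le> y \<longrightarrow> y \<le> b \<longrightarrow> f z \<le> max (f x) (f y)"
  have convex_comb_between: "min x y \<le> t * x + (1 - t) * y \<and> t * x + (1 - t) * y \<le> max x y"
    if "0 \<le> t" "t \<le> 1" for x y t :: real
    using that convex_bound_le[of x "max x y" y t "1 - t"] convex_bound_le[of "- x" "- min x y" "- y" t "1 - t"]
    by (auto simp: algebra_simps)
  show "quasi_convex_on {a..b} f"
    unfolding quasi_convex_on_def
  proof (intro ballI allI impI)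
    fix x y t :: real assume "x \<in> {a..b}" "y \<in> {a..b}" "0 \<le> t \<and> t \<le> 1"
    with convex_comb_between[of t x y] between
    have "f (t * x + (1 - t) * y) \<le> max (f (min x y)) (f (max x y))" by auto
    also have "\<dots> = max (f x) (f y)" by (auto simp: min_def max_def)
    finally show "f (t * x + (1 - t) * y) \<le> max (f x) (f y)" .
  qed
qed

lemma quasi_convex_on_compose_mono:
  assumes qc: "quasi_convex_on {c..d} f"
    and mono: "mono_on {a..b} g" and into: "g ` {a..b} \<subseteq> {c..d}"
    and h: "\<And>x. x \<in> {a..b} \<Longrightarrow> h x = f (g x)"
  shows "quasi_convex_on {a..b} h"
  unfolding quasi_convex_on_atLeastAtMost_iff
proof (intro allI impI)
  fix x z y assume xz: "a \<le> x" "x \<le> z" "z \<le> y" "y \<le> b"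
  have "g x \<le> g z" "g z \<le> g y" using mono xz by (auto intro: mono_onD)
  moreover have "c \<le> g x" "g y \<le> d" using into xz by (auto simp: image_subset_iff)
  ultimately have "f (g z) \<le> max (f (g x)) (f (g y))"
    using qc unfolding quasi_convex_on_atLeastAtMost_iff by blast
  then show "h z \<le> max (h x) (h y)" using h xz by simp
qed

lemma quasi_convex_on_if_deriv_pos_persists:
  fixes f f' :: "real \<Rightarrow> real"
  assumes deriv: "\<And>x. a \<le> x \<Longrightarrow> x \<le> b \<Longrightarrow> (f has_real_derivative f' x) (at x)"
    and sign: "\<And>x y. a \<le> x \<Longrightarrow> x < y \<Longrightarrow> y \<le> b \<Longrightarrow> 0 < f' x \<Longrightarrow> 0 \<le> f' y"
  shows "quasi_convex_on {a..b} f"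
  unfolding quasi_convex_on_atLeastAtMost_iff
proof (intro allI impI; rule ccontr)
  fix x z y assume xz: "a \<le> x" "x \<le> z" "z \<le> y" "y \<le> b"
    and "\<not> f z \<le> max (f x) (f y)"
  then have up: "f x < f z" and down: "f y < f z" by auto
  then have "x < z" "z < y" using xz by (auto simp: le_less)
  obtain \<alpha> where \<alpha>: "x < \<alpha>" "\<alpha> < z" "f z - f x = (z - x) * f' \<alpha>"
    using MVT2[of x z f f'] \<open>x < z\<close> deriv xz by auto
  obtain \<beta> where \<beta>: "z < \<beta>" "\<beta> < y" "f y - f z = (y - z) * f' \<beta>"
    using MVT2[of z y f f'] \<open>z < y\<close> deriv xz by auto
  have "0 < (z - x) * f' \<alpha>" using \<alpha> up by linarith
  then have rising: "0 < f' \<alpha>" using \<open>x < z\<close> by (simp add: zero_less_mult_iff)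
  have "(y - z) * f' \<beta> < 0" using \<beta> down by linarith
  then have falling: "f' \<beta> < 0" using \<open>z < y\<close> by (simp add: mult_less_0_iff)
  show False using sign[of \<alpha> \<beta>] rising falling \<alpha> \<beta> xz by linarith
qed

lemma pos_if_deriv_pos_at_zeros:
  fixes h h' :: "real \<Rightarrow> real"
  assumes deriv: "\<And>x. a \<le> x \<Longrightarrow> x \<le> b \<Longrightarrow> (h has_real_derivative h' x) (at x)"
    and zeros: "\<And>x. a \<le> x \<Longrightarrow> x \<le> b \<Longrightarrow> h x = 0 \<Longrightarrow> 0 < h' x"
    and "a \<le> b" and ha: "0 < h a"
  shows "0 < h b"
proof (rule ccontr)
  txt \<open>The first point \<open>s\<close> with \<open>h s \<le> 0\<close> is a zero, but \<open>h' s > 0\<close> makes \<open>h\<close> negative just left of it.\<close>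
  assume "\<not> 0 < h b"
  define S where "S = {x \<in> {a..b}. h x \<le> 0}"
  have cont: "isCont h x" if "a \<le> x" "x \<le> b" for x
    using deriv[OF that] DERIV_isCont by blast
  have "b \<in> S" using \<open>\<not> 0 < h b\<close> \<open>a \<le> b\<close> by (auto simp: S_def)
  moreover have "closed S" unfolding S_def
    by (rule continuous_on_closed_Collect_le) (auto intro!: continuous_at_imp_continuous_on cont)
  moreover have bdd: "bdd_below S" unfolding S_def by (rule bdd_belowI[of _ a]) auto
  ultimately have sS: "Inf S \<in> S" using closed_contains_Inf by blast
  define s where "s = Inf S"
  have s: "a \<le> s" "s \<le> b" "h s \<le> 0" using sS by (auto simp: S_def s_def)
  have first: "s \<le> x" if "x \<in> S" for x unfolding s_def using cInf_lower[OF that bdd] .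
  have "a < s" using s ha by (cases "a = s") auto
  obtain x where x: "a \<le> x" "x \<le> s" "h x = 0"
    using IVT2[of h s 0 a] s ha cont by fastforce
  then have "x \<in> S" using s by (auto simp: S_def)
  then have "h s = 0" using first x by force
  then obtain d where d: "0 < d" "\<And>e. 0 < e \<Longrightarrow> e < d \<Longrightarrow> h (s - e) < h s"
    using DERIV_pos_inc_left[OF deriv[OF s(1,2)]] zeros[OF s(1,2)] by blast
  define e where "e = min (d / 2) ((s - a) / 2)"
  have "e \<le> (s - a) / 2" unfolding e_def by (rule min.cobounded2)
  then have e: "0 < e" "e < d" "a \<le> s - e" using d \<open>a < s\<close> by (auto simp: e_def)
  then have "s - e \<in> S" using d(2)[OF e(1,2)] \<open>h s = 0\<close> s by (auto simp: S_def)
  then show False using first e by fastforce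
qed

definition Vinv :: "real \<Rightarrow> real" where "Vinv v = v * exp (v / (1 - v))"

lemma Vinv_strict_mono: "0 < a \<Longrightarrow> a < b \<Longrightarrow> b < 1 \<Longrightarrow> Vinv a < Vinv b"
proof -
  assume ab: "0 < a" "a < b" "b < 1"
  have "a / (1 - a) < b / (1 - b)" using ab by (simp add: field_simps)
  then have "exp (a / (1 - a)) < exp (b / (1 - b))" by simp
  then show ?thesis unfolding Vinv_def using ab by (intro mult_strict_mono) auto
qed

lemma inj_on_Vinv: "inj_on Vinv {0<..<1}"
proof (rule linorder_inj_onI')
  fix a b :: real assume "a \<in> {0<..<1}" "b \<in> {0<..<1}" "a < b"
  then show "Vinv a \<noteq> Vinv b" using Vinv_strict_mono[of a b] by simp
qed

lemma Vinv_ge: "0 < v \<Longrightarrow> v < 1 \<Longrightarrow> v \<le> Vinv v"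
  unfolding Vinv_def using one_le_exp_iff[of "v / (1 - v)"] by (simp add: mult_le_cancel_left1)

lemma isCont_Vinv: "v < 1 \<Longrightarrow> isCont Vinv v"
  unfolding Vinv_def by (intro continuous_intros) auto

lemma Vinv_surj:
  assumes "0 < x" shows "\<exists>v. 0 < v \<and> v < 1 \<and> Vinv v = x"
proof -
  define lo where "lo = min (1/2) (x / 6)"
  define hi where "hi = (2 * x + 1) / (2 * x + 2)"
  have lo: "0 < lo" "lo \<le> 1/2" using assms by (auto simp: lo_def)
  have hi: "1/2 \<le> hi" "hi < 1" using assms by (auto simp: hi_def field_simps)
  have "lo / (1 - lo) \<le> 1" using lo by (simp add: field_simps)
  then have "exp (lo / (1 - lo)) \<le> exp 1" by simp
  also have "exp (1::real) \<le> 3" using exp_le by simp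
  finally have "Vinv lo \<le> lo * 3" unfolding Vinv_def using lo by (intro mult_left_mono) auto
  also have "lo * 3 < x" using assms by (auto simp: lo_def)
  finally have lo_below: "Vinv lo < x" .
  have "hi / (1 - hi) = 2 * x + 1" using assms by (simp add: hi_def field_simps)
  then have "Vinv hi = hi * exp (2 * x + 1)" by (simp add: Vinv_def)
  also have "\<dots> \<ge> hi * (1 + (2 * x + 1))" using hi by (intro mult_left_mono exp_ge_add_one_self) auto
  also have "hi * (1 + (2 * x + 1)) = 2 * x + 1" using assms by (simp add: hi_def field_simps)
  finally have hi_above: "x \<le> Vinv hi" using assms by simp
  obtain v where "lo \<le> v" "v \<le> hi" "Vinv v = x"
    using IVT[of Vinv lo x hi] lo_below hi_above lo hi isCont_Vinv by fastforce
  then show ?thesis using lo hi by (intro exI[of _ v]) auto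
qed

lemma Vfun_bounds:
  assumes "0 < x" shows "0 < Vfun x" "Vfun x < 1" "Vinv (Vfun x) = x"
proof -
  have "\<exists>!v. 0 < v \<and> v < 1 \<and> Vinv v = x"
  proof (rule ex_ex1I)
    show "\<exists>v. 0 < v \<and> v < 1 \<and> Vinv v = x" by (rule Vinv_surj[OF assms])
    fix v w assume "0 < v \<and> v < 1 \<and> Vinv v = x" "0 < w \<and> w < 1 \<and> Vinv w = x"
    then show "v = w" using inj_onD[OF inj_on_Vinv, of v w] by simp
  qed
  from theI'[OF this] show "0 < Vfun x" "Vfun x < 1" "Vinv (Vfun x) = x"
    unfolding Vfun_def Vinv_def by blast+
qed

lemma Vfun_Vinv:
  assumes "0 < v" "v < 1" shows "Vfun (Vinv v) = v"
proof -
  have "0 < Vinv v" using Vinv_ge[OF assms] assms by linarith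
  from Vfun_bounds[OF this] show ?thesis
    using inj_onD[OF inj_on_Vinv, of "Vfun (Vinv v)" v] assms by simp
qed

lemma Vfun_strict_mono:
  assumes "0 < x" "x < y" shows "Vfun x < Vfun y"
proof (rule ccontr)
  note Vx = Vfun_bounds[of x] and Vy = Vfun_bounds[of y]
  assume "\<not> Vfun x < Vfun y"
  then have "Vinv (Vfun y) \<le> Vinv (Vfun x)"
    using Vinv_strict_mono[of "Vfun y" "Vfun x"] Vx Vy assms by (cases "Vfun y = Vfun x") auto
  then show False using Vx Vy assms by simp
qed

lemma Vfun_mono: "0 < x \<Longrightarrow> x \<le> y \<Longrightarrow> Vfun x \<le> Vfun y"
  using Vfun_strict_mono[of x y] by (cases "x = y") auto

lemma Vfun_le: "0 < x \<Longrightarrow> Vfun x \<le> x"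
  using Vfun_bounds[of x] Vinv_ge[of "Vfun x"] by auto

lemma isCont_Vfun:
  assumes "0 < x" shows "isCont Vfun x"
proof -
  define v where "v = Vfun x"
  have v: "0 < v" "v < 1" "Vinv v = x" using Vfun_bounds[OF assms] by (auto simp: v_def)
  define d where "d = min v (1 - v) / 2"
  have "0 < d" using v by (auto simp: d_def)
  have near: "0 < z \<and> z < 1" if "\<bar>z - v\<bar> \<le> d" for z
  proof -
    have "\<bar>z - v\<bar> * 2 \<le> v" "\<bar>z - v\<bar> * 2 \<le> 1 - v" using that by (auto simp: d_def)
    then show ?thesis using v by (auto simp: abs_if split: if_splits)
  qed
  have "isCont Vfun (Vinv v)"
    by (rule isCont_inverse_function[OF \<open>0 < d\<close>]) (simp_all add: near Vfun_Vinv isCont_Vinv)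
  then show ?thesis using v by simp
qed

lemma q0bar_bounds:
  assumes T: "finite T" "T \<noteq> {}"
  shows "0 < q0bar \<theta> T" "q0bar \<theta> T < 1"
    "(\<Sum>i\<in>T. Vfun (q0bar \<theta> T * exp (\<theta> i - 1))) = 1 - q0bar \<theta> T"
proof -
  define S where "S q = (\<Sum>i\<in>T. Vfun (q * exp (\<theta> i - 1)))" for q
  have S_strict_mono: "S x < S y" if "0 < x" "x < y" for x y
    unfolding S_def using T that by (intro sum_strict_mono) (auto intro!: Vfun_strict_mono)
  have S_cont: "isCont (\<lambda>q. S q + q) x" if "0 < x" for x
  proof -
    have "isCont (\<lambda>q. Vfun (q * exp (\<theta> i - 1))) x" for i
      by (rule isCont_o2[where g = Vfun]) (use that in \<open>auto intro!: isCont_Vfun\<close>)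
    then show ?thesis unfolding S_def by (intro continuous_intros) auto
  qed
  define C where "C = (\<Sum>i\<in>T. exp (\<theta> i - 1))"
  have "0 < C" unfolding C_def using T by (intro sum_pos) auto
  define q1 where "q1 = 1 / (C + 1)"
  have q1: "0 < q1" "q1 < 1" using \<open>0 < C\<close> by (auto simp: q1_def field_simps)
  have "S q1 \<le> (\<Sum>i\<in>T. q1 * exp (\<theta> i - 1))"
    unfolding S_def using q1 by (intro sum_mono Vfun_le) auto
  also have "\<dots> = q1 * C" by (simp add: C_def sum_distrib_left)
  finally have below: "S q1 + q1 \<le> 1" using \<open>0 < C\<close> by (simp add: q1_def field_simps)
  have "0 < S 1" unfolding S_def using T by (intro sum_pos) (auto simp: Vfun_bounds)
  obtain q where q: "q1 \<le> q" "q \<le> 1" "S q + q = 1"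
    using IVT[of "\<lambda>q. S q + q" q1 1 1] below \<open>0 < S 1\<close> q1 S_cont by force
  then have q01: "0 < q" "q < 1" using \<open>0 < S 1\<close> q1 by (auto simp: le_less)
  have "\<exists>!q. 0 < q \<and> q < 1 \<and> S q = 1 - q"
  proof (rule ex1I[of _ q])
    show "0 < q \<and> q < 1 \<and> S q = 1 - q" using q01 q by auto
    fix r assume r: "0 < r \<and> r < 1 \<and> S r = 1 - r"
    show "r = q"
      using S_strict_mono[of r q] S_strict_mono[of q r] r q01 q by (cases r q rule: linorder_cases) auto
  qed
  from theI'[OF this] show "0 < q0bar \<theta> T" "q0bar \<theta> T < 1"
    "(\<Sum>i\<in>T. Vfun (q0bar \<theta> T * exp (\<theta> i - 1))) = 1 - q0bar \<theta> T"
    unfolding q0bar_def S_def by blast+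
qed

definition phi :: "real \<Rightarrow> real \<Rightarrow> real" where "phi c v = Vinv v / c"

definition F :: "real \<Rightarrow> real \<Rightarrow> real" where "F c v = v / (1 - v) + 1 / (phi c v + v) - 1"

definition dphi :: "real \<Rightarrow> real \<Rightarrow> real" where "dphi c v = phi c v * (1 / v + 1 / (1 - v)\<^sup>2)"

definition dF :: "real \<Rightarrow> real \<Rightarrow> real" where
  "dF c v = 1 / (1 - v)\<^sup>2 - (dphi c v + 1) / (phi c v + v)\<^sup>2"

text \<open>\<open>G (phi c v) v\<close> is \<open>dF c v\<close> times a positive factor (\<open>dF_times\<close>); \<open>G_dq\<close> and \<open>G_dv\<close> are
  the partial derivatives of \<open>G\<close>.\<close>

definition G :: "real \<Rightarrow> real \<Rightarrow> real" where "G q v = v * q\<^sup>2 + q * v\<^sup>2 + q * v - q - v + 2 * v\<^sup>2"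

definition G_dq :: "real \<Rightarrow> real \<Rightarrow> real" where "G_dq q v = 2 * v * q + v\<^sup>2 + v - 1"

definition G_dv :: "real \<Rightarrow> real \<Rightarrow> real" where "G_dv q v = q\<^sup>2 + 2 * q * v + q - 1 + 4 * v"

lemma phi_pos: "0 < c \<Longrightarrow> 0 < v \<Longrightarrow> 0 < phi c v"
  by (simp add: phi_def Vinv_def)

lemma phi_mono: "0 < c \<Longrightarrow> 0 < v \<Longrightarrow> v \<le> w \<Longrightarrow> w < 1 \<Longrightarrow> phi c v \<le> phi c w"
  using Vinv_strict_mono[of v w] unfolding phi_def by (cases "v = w") (auto intro: divide_right_mono)

lemma phi_Vfun: "0 < c \<Longrightarrow> 0 < q \<Longrightarrow> phi c (Vfun (q * c)) = q"
  using Vfun_bounds[of "q * c"] unfolding phi_def by simp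

lemma DERIV_phi:
  assumes "0 < c" "0 < v" "v < 1"
  shows "(phi c has_real_derivative dphi c v) (at v)"
proof -
  have "((\<lambda>v. v * exp (v / (1 - v)) / c) has_real_derivative
     (exp (v / (1 - v)) + v * (exp (v / (1 - v)) * ((1 * (1 - v) - v * (0 - 1)) / (1 - v)\<^sup>2))) / c) (at v)"
    using assms by (auto intro!: derivative_eq_intros simp: power2_eq_square)
  moreover have "(exp (v / (1 - v)) + v * (exp (v / (1 - v)) * ((1 * (1 - v) - v * (0 - 1)) / (1 - v)\<^sup>2))) / c
      = dphi c v"
    using assms by (simp add: dphi_def phi_def Vinv_def field_simps power2_eq_square)
  ultimately show ?thesis unfolding phi_def[abs_def] Vinv_def by simp
qed

lemma DERIV_F:
  assumes "0 < c" "0 < v" "v < 1"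
  shows "(F c has_real_derivative dF c v) (at v)"
proof -
  have "0 < phi c v" using phi_pos assms by auto
  then have "((\<lambda>v. v / (1 - v) + 1 / (phi c v + v) - 1) has_real_derivative
      (1 * (1 - v) - v * (0 - 1)) / (1 - v)\<^sup>2 + (- (1 * (dphi c v + 1)) / (phi c v + v)\<^sup>2) - 0) (at v)"
    using assms by (auto intro!: derivative_eq_intros DERIV_phi simp: power2_eq_square)
  moreover have "(1 * (1 - v) - v * (0 - 1)) / (1 - v)\<^sup>2 + (- (1 * (dphi c v + 1)) / (phi c v + v)\<^sup>2) - 0
      = dF c v"
    using assms by (simp add: dF_def add_divide_distrib diff_divide_distrib)
  ultimately show ?thesis unfolding F_def[abs_def] by simp
qed

lemma dphi_times:
  assumes "0 < v" "v < 1"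
  shows "dphi c v * (v * (1 - v)\<^sup>2) = phi c v * (1 - v + v\<^sup>2)"
proof -
  have "dphi c v * (v * (1 - v)\<^sup>2) = phi c v * ((1 - v)\<^sup>2 + v)"
    unfolding dphi_def using assms by (simp add: field_simps)
  also have "\<dots> = phi c v * (1 - v + v\<^sup>2)" by (simp add: power2_eq_square algebra_simps)
  finally show ?thesis .
qed

lemma dF_times:
  assumes "0 < c" "0 < v" "v < 1"
  shows "dF c v * (v * (1 - v)\<^sup>2 * (phi c v + v)\<^sup>2) = G (phi c v) v"
proof -
  define P where "P = phi c v"
  have nz: "(P + v)\<^sup>2 \<noteq> 0" "(1 - v)\<^sup>2 \<noteq> 0" using phi_pos[of c v] assms by (auto simp: P_def)
  have "dF c v * (v * (1 - v)\<^sup>2 * (P + v)\<^sup>2) = v * (P + v)\<^sup>2 - (dphi c v + 1) * (v * (1 - v)\<^sup>2)"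
    unfolding dF_def P_def[symmetric] using nz by (simp add: left_diff_distrib)
  also have "\<dots> = v * (P + v)\<^sup>2 - P * (1 - v + v\<^sup>2) - v * (1 - v)\<^sup>2"
    using dphi_times[OF assms(2,3), of c] unfolding P_def[symmetric] by (simp add: algebra_simps)
  also have "\<dots> = G P v" by (simp add: G_def power2_eq_square algebra_simps)
  finally show ?thesis unfolding P_def .
qed

lemma dF_pos_iff:
  assumes "0 < c" "0 < v" "v < 1"
  shows "0 < dF c v \<longleftrightarrow> 0 < G (phi c v) v"
proof -
  have "0 < v * (1 - v)\<^sup>2 * (phi c v + v)\<^sup>2" using assms phi_pos[of c v] by auto
  then show ?thesis using dF_times[OF assms] by (metis zero_less_mult_pos2 mult_pos_pos)
qed

lemma G_zero_imp_half_le: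
  assumes "0 < v" "v < 1" "0 < q" "q + v \<le> 1" "G q v = 0"
  shows "1/2 \<le> v"
proof (rule ccontr)
  assume v: "\<not> 1/2 \<le> v"
  show False
  proof (cases "q \<le> 1/2")
    case True
    have id: "G q v = (q + 2) * (v * (v - 1/2)) - q * (1 - 2 * v) + v * (q * (q - 1/2))"
      by (simp add: G_def field_simps power2_eq_square)
    have "(q + 2) * (v * (v - 1/2)) < 0" using assms v by (intro mult_pos_neg mult_pos_neg) auto
    moreover have "q * (1 - 2 * v) > 0" using assms v by auto
    moreover have "v * (q * (q - 1/2)) \<le> 0"
      using assms True by (intro mult_nonneg_nonpos mult_nonneg_nonpos) auto
    ultimately show False using id assms by linarith
  next
    case False
    have id: "(1 - q) * G q v = (1 - q) * (q + 2) * (v * (v - (1 - q))) - q * (1 - q - v) + (1 - 2 * q) * v"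
      by (simp add: G_def algebra_simps power2_eq_square)
    have "(1 - q) * (q + 2) * (v * (v - (1 - q))) \<le> 0"
      using assms by (intro mult_nonneg_nonpos mult_nonneg_nonpos) auto
    moreover have "q * (1 - q - v) \<ge> 0" using assms by auto
    moreover have "(1 - 2 * q) * v < 0" using assms False by (intro mult_neg_pos) auto
    moreover have "(1 - q) * G q v = 0" using assms by simp
    ultimately show False using id by linarith
  qed
qed

lemma G_deriv_combination_pos:
  assumes "0 < v" "v < 1" "0 < q" "q + v \<le> 1" "1/2 \<le> v"
  shows "0 < G_dv q v * (v * (1 - v)\<^sup>2) + G_dq q v * (q * (1 - v + v\<^sup>2))"
proof -
  have "q\<^sup>2 \<ge> 0" "q * v \<ge> 0" using assms by auto
  then have "G_dv q v \<ge> 1" using assms unfolding G_dv_def by linarith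
  moreover have w: "0 < v * (1 - v)\<^sup>2" using assms by auto
  ultimately have first_ge: "G_dv q v * (v * (1 - v)\<^sup>2) \<ge> v * (1 - v)\<^sup>2"
    by (simp add: mult_le_cancel_right1)
  have "0 \<le> v * v" "v * v \<le> v * 1" using assms by (auto intro: mult_left_mono)
  then have D: "0 < 1 - v + v\<^sup>2" "1 - v + v\<^sup>2 \<le> 1"
    unfolding power2_eq_square using assms by linarith+
  show ?thesis
  proof (cases "G_dq q v \<ge> 0")
    case True
    then have "G_dq q v * (q * (1 - v + v\<^sup>2)) \<ge> 0" using D assms by auto
    then show ?thesis using first_ge w by linarith
  next
    case False
    txt \<open>Then \<open>v < 0.62\<close>, so the first term is at least \<open>0.07\<close> and the second at least \<open>-1/64\<close>.\<close>
    have "v < 0.62"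
    proof (rule ccontr)
      assume "\<not> v < 0.62"
      then have "v * v \<ge> 0.62 * 0.62" by (intro mult_mono) auto
      moreover have "v * q \<ge> 0" using assms by auto
      ultimately show False using False \<open>\<not> v < 0.62\<close> unfolding G_dq_def by (simp add: power2_eq_square)
    qed
    then have "(1 - v)\<^sup>2 > 0.38\<^sup>2" by (intro power_strict_mono) auto
    then have "0.1444 \<le> (1 - v)\<^sup>2" by (simp add: power2_eq_square)
    then have "0.5 * 0.1444 \<le> v * (1 - v)\<^sup>2" using assms by (intro mult_mono) auto
    then have first: "G_dv q v * (v * (1 - v)\<^sup>2) * 100 \<ge> 7" using first_ge by simp
    have "v * q \<ge> (1/2) * q" using assms by (intro mult_right_mono) auto
    moreover have "v * v \<ge> (1/2) * (1/2)" using assms by (intro mult_mono) auto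
    ultimately have "G_dq q v \<ge> q - 1/4" using assms unfolding G_dq_def power2_eq_square by linarith
    have "G_dq q v * (q * (1 - v + v\<^sup>2)) \<ge> G_dq q v * q"
    proof -
      have "G_dq q v * q \<le> 0" using False assms by (simp add: mult_nonpos_nonneg)
      moreover have "1 - v + v\<^sup>2 - 1 \<le> 0" using D by linarith
      ultimately have "0 \<le> (G_dq q v * q) * (1 - v + v\<^sup>2 - 1)" by (rule mult_nonpos_nonpos)
      then show ?thesis by (simp add: algebra_simps)
    qed
    moreover have "G_dq q v * q \<ge> (q - 1/4) * q"
      using \<open>G_dq q v \<ge> q - 1/4\<close> assms by (intro mult_right_mono) auto
    moreover have "(q - 1/4) * q \<ge> - 1/64"
    proof -
      have "0 \<le> (q - 1/8)\<^sup>2" by simp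
      then show ?thesis by (simp add: power2_eq_square algebra_simps)
    qed
    ultimately show ?thesis using first by linarith
  qed
qed

lemma DERIV_G_phi:
  assumes "0 < c" "0 < v" "v < 1"
  shows "((\<lambda>v. G (phi c v) v) has_real_derivative G_dq (phi c v) v * dphi c v + G_dv (phi c v) v) (at v)"
proof -
  have "((\<lambda>v. G (phi c v) v) has_real_derivative
     dphi c v * (v * (2 * phi c v)) + (phi c v)\<^sup>2 + (dphi c v * v\<^sup>2 + phi c v * (2 * v))
       + (dphi c v * v + phi c v) - dphi c v - 1 + 2 * (2 * v)) (at v)"
    unfolding G_def using assms
    by (auto intro!: derivative_eq_intros DERIV_phi simp: power2_eq_square algebra_simps)
  moreover have "dphi c v * (v * (2 * phi c v)) + (phi c v)\<^sup>2 + (dphi c v * v\<^sup>2 + phi c v * (2 * v))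
       + (dphi c v * v + phi c v) - dphi c v - 1 + 2 * (2 * v)
     = G_dq (phi c v) v * dphi c v + G_dv (phi c v) v"
    by (simp add: G_dq_def G_dv_def algebra_simps power2_eq_square)
  ultimately show ?thesis by simp
qed

lemma G_phi_deriv_pos_at_zero:
  assumes "0 < c" "0 < v" "v < 1" "phi c v + v \<le> 1" "G (phi c v) v = 0"
  shows "0 < G_dq (phi c v) v * dphi c v + G_dv (phi c v) v"
proof -
  define P where "P = phi c v"
  have "0 < P" using phi_pos assms by (auto simp: P_def)
  then have "1/2 \<le> v" using G_zero_imp_half_le[of v P] assms by (auto simp: P_def)
  have "(G_dq P v * dphi c v + G_dv P v) * (v * (1 - v)\<^sup>2)
      = G_dq P v * (dphi c v * (v * (1 - v)\<^sup>2)) + G_dv P v * (v * (1 - v)\<^sup>2)"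
    by (simp add: algebra_simps)
  also have "\<dots> = G_dv P v * (v * (1 - v)\<^sup>2) + G_dq P v * (P * (1 - v + v\<^sup>2))"
    using dphi_times[of v c] assms unfolding P_def[symmetric] by simp
  finally have "(G_dq P v * dphi c v + G_dv P v) * (v * (1 - v)\<^sup>2)
      = G_dv P v * (v * (1 - v)\<^sup>2) + G_dq P v * (P * (1 - v + v\<^sup>2))" .
  moreover have "0 < G_dv P v * (v * (1 - v)\<^sup>2) + G_dq P v * (P * (1 - v + v\<^sup>2))"
    using G_deriv_combination_pos[of v P] assms \<open>0 < P\<close> \<open>1/2 \<le> v\<close> by (auto simp: P_def)
  moreover have "0 < v * (1 - v)\<^sup>2" using assms by auto
  ultimately show ?thesis unfolding P_def[symmetric] by (metis zero_less_mult_pos2)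
qed

lemma quasi_convex_on_F:
  assumes c: "0 < c" and u: "0 < u1" "u2 < 1"
    and region: "\<And>v. u1 \<le> v \<Longrightarrow> v \<le> u2 \<Longrightarrow> phi c v + v \<le> 1"
  shows "quasi_convex_on {u1..u2} (F c)"
proof (rule quasi_convex_on_if_deriv_pos_persists)
  show "(F c has_real_derivative dF c v) (at v)" if "u1 \<le> v" "v \<le> u2" for v
    using DERIV_F c u that by auto
next
  fix \<alpha> \<beta> assume \<alpha>\<beta>: "u1 \<le> \<alpha>" "\<alpha> < \<beta>" "\<beta> \<le> u2" and "0 < dF c \<alpha>"
  have "0 < G (phi c \<beta>) \<beta>"
  proof (rule pos_if_deriv_pos_at_zeros[of \<alpha> \<beta> "\<lambda>v. G (phi c v) v"])
    show "((\<lambda>v. G (phi c v) v) has_real_derivative G_dq (phi c v) v * dphi c v + G_dv (phi c v) v) (at v)"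
      if "\<alpha> \<le> v" "v \<le> \<beta>" for v
      using DERIV_G_phi c u \<alpha>\<beta> that by auto
    show "0 < G_dq (phi c v) v * dphi c v + G_dv (phi c v) v"
      if "\<alpha> \<le> v" "v \<le> \<beta>" "G (phi c v) v = 0" for v
      using G_phi_deriv_pos_at_zero region c u \<alpha>\<beta> that by auto
    show "0 < G (phi c \<alpha>) \<alpha>" using dF_pos_iff \<open>0 < dF c \<alpha>\<close> c u \<alpha>\<beta> by auto
  qed (use \<alpha>\<beta> in auto)
  then have "0 < dF c \<beta>" using dF_pos_iff[of c \<beta>] c u \<alpha>\<beta> by simp
  then show "0 \<le> dF c \<beta>" by simp
qed

theorem mainTheorem11:
  fixes n :: nat and \<theta> :: "nat \<Rightarrow> real"
  assumes "n \<ge> 2"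
    and "\<And>i j. 1 \<le> i \<Longrightarrow> i \<le> j \<Longrightarrow> j \<le> n \<Longrightarrow> \<theta> j \<le> \<theta> i"
    and "\<And>i. 1 \<le> i \<Longrightarrow> i \<le> n \<Longrightarrow> 0 \<le> \<theta> i"
  shows "quasi_convex_on {q0bar \<theta> {1, 2} .. q0bar \<theta> {1}}
           (\<lambda>q. Vfun (q * exp (\<theta> 1 - 1)) / (1 - Vfun (q * exp (\<theta> 1 - 1)))
                + 1 / (q + Vfun (q * exp (\<theta> 1 - 1))) - 1)"
proof -
  define c where "c = exp (\<theta> 1 - 1)"
  define qmin where "qmin = q0bar \<theta> {1, 2}"
  define qmax where "qmax = q0bar \<theta> {1}"
  have "0 < c" by (simp add: c_def)
  have "0 < qmin" using q0bar_bounds[of "{1, 2}" \<theta>] by (simp add: qmin_def)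
  have qmax: "0 < qmax" "Vfun (qmax * c) = 1 - qmax"
    using q0bar_bounds[of "{1}" \<theta>] by (simp_all add: qmax_def c_def)
  have region: "phi c v + v \<le> 1" if "Vfun (qmin * c) \<le> v" "v \<le> Vfun (qmax * c)" for v
  proof -
    have "0 < v" "v < 1" using that Vfun_bounds[of "qmin * c"] qmax \<open>0 < c\<close> \<open>0 < qmin\<close> by auto
    then have "phi c v \<le> phi c (Vfun (qmax * c))" using that qmax \<open>0 < c\<close> by (intro phi_mono) auto
    then show ?thesis using phi_Vfun[OF \<open>0 < c\<close> qmax(1)] that qmax by simp
  qed
  have "quasi_convex_on {Vfun (qmin * c)..Vfun (qmax * c)} (F c)"
    using quasi_convex_on_F[OF \<open>0 < c\<close> _ _ region] Vfun_bounds qmax \<open>0 < c\<close> \<open>0 < qmin\<close> by simp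
  then have "quasi_convex_on {qmin..qmax} (\<lambda>q. Vfun (q * c) / (1 - Vfun (q * c)) + 1 / (q + Vfun (q * c)) - 1)"
  proof (rule quasi_convex_on_compose_mono[where g = "\<lambda>q. Vfun (q * c)"])
    show "mono_on {qmin..qmax} (\<lambda>q. Vfun (q * c))"
      using \<open>0 < c\<close> \<open>0 < qmin\<close> by (intro mono_onI Vfun_mono) auto
    show "(\<lambda>q. Vfun (q * c)) ` {qmin..qmax} \<subseteq> {Vfun (qmin * c)..Vfun (qmax * c)}"
      using \<open>0 < c\<close> \<open>0 < qmin\<close> by (auto intro!: Vfun_mono)
    show "Vfun (q * c) / (1 - Vfun (q * c)) + 1 / (q + Vfun (q * c)) - 1 = F c (Vfun (q * c))"
      if "q \<in> {qmin..qmax}" for q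
      using that phi_Vfun[OF \<open>0 < c\<close>, of q] \<open>0 < qmin\<close> by (simp add: F_def)
  qed
  then show ?thesis by (simp add: c_def qmin_def qmax_def)
qed

end
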